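(* Assume the CFL condition $0\le \lambda \sup_{w\ge 1} W'(w)\le 1$, and let $(y_{0,i})_{i\in\mathbb Z}$ be a bounded sequence with $y_{0,i}\ge1$ and $|y_{0}|_{BV}:=\sum_{i\in\mathbb Z}|y_{0,i+1}-y_{0,i}|<\infty$. Let $(w^n_i)$ be the solution of the scheme. Then for all $n\ge0$ and $i\in\mathbb Z$: $$1\le \inf_j y_{0,j}\le w^n_i\le \sup_j y_{0,j},\qquad \sum_{i}|w^n_{i+1}-w^n_i|\le \sum_i|y_{0,i+1}-y_{0,i}|,$$ $$\Delta z\sum_i|w^{n+1}_i-w^n_i|\le \Delta t\,\|W'\|_{\infty}\,|y_0|_{BV},$$ where $\|W'\|_\infty=\sup_{w\ge1}|W'(w)|$.
   Context: Kernel: $\Phi:[0,\infty)\to[0,\infty)$ is non-increasing with $\int_0^\infty\Phi(z)\,dz=1$ and $\int_0^\infty z\Phi(z)\,dz<\infty$; for $\alpha>0$, $\Phi_\alpha(z)=\alpha^{-1}\Phi(z/\alpha)$. Flux: $V\in C^1([0,\infty))$ is non-increasing and $W:[1,\infty)\to\mathbb R$, $W(w)=V(1/w)$. Discretization: $\Delta z>0$, $\Delta t>0$, $\lambda=\Delta t/\Delta z$, $z_j=(j-\tfrac12)\Delta z$ for $j\in\tfrac12\mathbb Z$, and for integers $j\ge i$, $\Phi_{ij\alpha}=\int_{z_{j-1/2}}^{z_{j+1/2}}\Phi_\alpha(\zeta-z_{i-1/2})\,d\zeta$. The scheme: $w^0_i=\sum_{j\ge i}\Phi_{ij\alpha}y_{0,j}$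 and $w^{n+1}_i=w^n_i+\lambda(\overline W^{\,n}_{i+1/2}-\overline W^{\,n}_{i-1/2})$ for $n\ge0$, where $\overline W^{\,n}_{i-1/2}=\sum_{j\ge i}\Phi_{ij\alpha}W(w^n_j)$. *)

theory Defs
  imports "HOL-Analysis.Analysis"
begin

definition Phi_alpha :: "(real \<Rightarrow> real) \<Rightarrow> real \<Rightarrow> real \<Rightarrow> real" where
  "Phi_alpha Phi \<alpha> z = Phi (z / \<alpha>) / \<alpha>"

text \<open>Grid points z_j = (j - 1/2) dz, for j a half-integer (given as a real).\<close>
definition zpt :: "real \<Rightarrow> real \<Rightarrow> real" where
  "zpt dz j = (j - 1/2) * dz"

definition Phi_coef :: "(real \<Rightarrow> real) \<Rightarrow> real \<Rightarrow> real \<Rightarrow> int \<Rightarrow> int \<Rightarrow> real" where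
  "Phi_coef Phi \<alpha> dz i j =
     integral {zpt dz (real_of_int j - 1/2) .. zpt dz (real_of_int j + 1/2)}
       (\<lambda>\<zeta>. Phi_alpha Phi \<alpha> (\<zeta> - zpt dz (real_of_int i - 1/2)))"

text \<open>Flux W(w) = V(1/w) (meaningful for w >= 1).\<close>
definition Wf :: "(real \<Rightarrow> real) \<Rightarrow> real \<Rightarrow> real" where
  "Wf V w = V (1 / w)"

text \<open>Nonlocal flux at the interface i - 1/2: sum over j >= i of Phi_{ij alpha} W(w_j).\<close>
definition Wbar :: "(real \<Rightarrow> real) \<Rightarrow> real \<Rightarrow> real \<Rightarrow> (real \<Rightarrow> real) \<Rightarrow> (int \<Rightarrow> real) \<Rightarrow> int \<Rightarrow> real" where
  "Wbar Phi \<alpha> dz V w i = (\<Sum>\<^sub>\<infinity> j\<in>{i..}. Phi_coef Phi \<alpha> dz i j * Wf V (w j))"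

primrec scheme :: "(real \<Rightarrow> real) \<Rightarrow> real \<Rightarrow> real \<Rightarrow> real \<Rightarrow> (real \<Rightarrow> real) \<Rightarrow> (int \<Rightarrow> real)
                    \<Rightarrow> nat \<Rightarrow> int \<Rightarrow> real" where
  "scheme Phi \<alpha> dz dt V y0 0 i = (\<Sum>\<^sub>\<infinity> j\<in>{i..}. Phi_coef Phi \<alpha> dz i j * y0 j)"
| "scheme Phi \<alpha> dz dt V y0 (Suc n) i =
     scheme Phi \<alpha> dz dt V y0 n i
     + (dt / dz) * (Wbar Phi \<alpha> dz V (scheme Phi \<alpha> dz dt V y0 n) (i + 1)
                    - Wbar Phi \<alpha> dz V (scheme Phi \<alpha> dz dt V y0 n) i)"

end

(*
  The coefficients Phi_{ij alpha} depend only on k = j - i, and c_k = Phi_{i,i+k,alpha} is a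
  nonincreasing sequence of nonnegative weights with sum 1, because Phi is nonincreasing with
  integral 1. Thus Wbar_{i-1/2} = sum_k c_k W(w_{i+k}), and summation by parts rewrites one step as
    w^{n+1}_i = w_i + lam * sum_k (c_k - c_{k+1}) * (W(w_{i+k+1}) - W(w_i)),
  a combination with nonnegative weights of total c_0 <= 1. Since W is nondecreasing and
  lam * sup W' <= 1, the correction lies between -(w_i - inf w) and sup w - w_i: this is the
  maximum principle. For the differences D_i = w_{i+1} - w_i the same identity gives
    D^{n+1}_i = (D_i - lam c_0 (W(w_{i+1}) - W(w_i)))
                + lam * sum_k (c_k - c_{k+1}) * (W(w_{i+k+2}) - W(w_{i+k+1})),
  where the bracket keeps the sign of D_i and loses lam c_0 |W(w_{i+1}) - W(w_i)| in modulus;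
  summed over i, the last term gives back exactly this loss, so the total variation does not
  increase. Finally w^{n+1}_i - w^n_i = lam * sum_k c_k (W(w_{i+k+1}) - W(w_{i+k})), whose moduli
  sum to at most lam * sup |W'| * TV(w^n).
*)

theory Submission
  imports Defs
begin

lemma integral_tendsto_at_top_nonneg:
  fixes f :: "real \<Rightarrow> real"
  assumes "(f has_integral I) {a..}" and "\<And>x. a \<le> x \<Longrightarrow> 0 \<le> f x"
  shows "((\<lambda>b. integral {a..b} f) \<longlongrightarrow> I) at_top"
proof -
  have abs_int: "f absolutely_integrable_on {a..}"
    using assms by (intro nonnegative_absolutely_integrable_1) (auto simp: has_integral_integrable)
  have "((\<lambda>b. set_lebesgue_integral lebesgue {a..b} f) \<longlongrightarrow> set_lebesgue_integral lebesgue {a..} f) at_top"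
    by (rule tendsto_set_lebesgue_integral_at_top) (use abs_int in auto)
  moreover have "set_lebesgue_integral lebesgue {a..b} f = integral {a..b} f" for b
    by (rule set_lebesgue_integral_eq_integral(2), rule set_integrable_subset[OF abs_int]) auto
  moreover have "set_lebesgue_integral lebesgue {a..} f = I"
    using set_lebesgue_integral_eq_integral(2)[OF abs_int] assms(1) by (simp add: integral_unique)
  ultimately show ?thesis by simp
qed

lemma antimono_integrable_on:
  fixes f :: "real \<Rightarrow> real"
  assumes "\<And>x y. a \<le> x \<Longrightarrow> x \<le> y \<Longrightarrow> y \<le> b \<Longrightarrow> f y \<le> f x"
  shows "f integrable_on {a..b}"
proof -
  have "mono_on {a..b} (\<lambda>x. - f x)"
    by (intro mono_onI) (use assms in auto)
  then show ?thesis
    using integrable_neg[OF integrable_on_mono_on] by fastforce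
qed

lemma diff_le_of_deriv_le:
  fixes f f' :: "real \<Rightarrow> real"
  assumes "a \<le> b"
    and "\<And>x. x \<in> {a..b} \<Longrightarrow> (f has_real_derivative f' x) (at x)"
    and "\<And>x. x \<in> {a..b} \<Longrightarrow> f' x \<le> K"
  shows "f b - f a \<le> K * (b - a)"
proof -
  have "f b - K * b \<le> f a - K * a"
  proof (rule deriv_nonpos_imp_antimono[where g = "\<lambda>x. f x - K * x" and g' = "\<lambda>x. f' x - K"])
    show "((\<lambda>x. f x - K * x) has_real_derivative f' x - K) (at x)" if "x \<in> {a..b}" for x
      using assms(2)[OF that] by (auto intro!: derivative_eq_intros)
  qed (use assms in auto)
  then show ?thesis by (simp add: algebra_simps)
qed

lemma has_sum_diff:
  fixes f g :: "'a \<Rightarrow> real"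
  assumes "(f has_sum a) A" and "(g has_sum b) A"
  shows "((\<lambda>x. f x - g x) has_sum (a - b)) A"
  using has_sum_add[OF assms(1) has_sum_cmult_right[OF assms(2), of "-1"]] by simp

lemma abs_diff_same_sign:
  fixes a b :: real
  assumes "0 \<le> a * b" and "\<bar>b\<bar> \<le> \<bar>a\<bar>"
  shows "\<bar>a - b\<bar> = \<bar>a\<bar> - \<bar>b\<bar>"
  using assms by (auto simp: abs_if zero_le_mult_iff)

lemma summable_on_abs_le:
  fixes f g :: "'a \<Rightarrow> real"
  assumes "f summable_on A" and "\<And>x. x \<in> A \<Longrightarrow> \<bar>g x\<bar> \<le> f x"
  shows "g summable_on A"
proof -
  have "(\<lambda>x. norm (g x)) summable_on A"
    by (rule Infinite_Sum.abs_summable_on_comparison_test'[OF assms(1)]) (use assms(2) in auto)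
  then show ?thesis
    by (rule summable_on_iff_abs_summable_on_real[THEN iffD2])
qed

lemma abs_infsum_le:
  fixes f g :: "'a \<Rightarrow> real"
  assumes "f summable_on A" and "\<And>x. x \<in> A \<Longrightarrow> \<bar>g x\<bar> \<le> f x"
  shows "\<bar>infsum g A\<bar> \<le> infsum f A"
proof -
  have abs: "(\<lambda>x. \<bar>g x\<bar>) summable_on A"
    using Infinite_Sum.abs_summable_on_comparison_test'[OF assms(1), of g] assms(2) by simp
  have "\<bar>infsum g A\<bar> \<le> (\<Sum>\<^sub>\<infinity>x\<in>A. \<bar>g x\<bar>)"
    using norm_infsum_bound[of g A] abs by simp
  also have "\<dots> \<le> infsum f A"
    by (rule infsum_mono[OF abs assms(1)]) (use assms(2) in auto)
  finally show ?thesis .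
qed

lemma abs_summable_on_dominated:
  fixes f R :: "'a \<Rightarrow> real"
  assumes "(R has_sum T) A" and "\<And>x. x \<in> A \<Longrightarrow> \<bar>f x\<bar> \<le> R x"
  shows "(\<lambda>x. \<bar>f x\<bar>) summable_on A" and "(\<Sum>\<^sub>\<infinity>x\<in>A. \<bar>f x\<bar>) \<le> T"
proof -
  show abs: "(\<lambda>x. \<bar>f x\<bar>) summable_on A"
    using assms by (intro summable_on_abs_le[OF has_sum_imp_summable]) auto
  show "(\<Sum>\<^sub>\<infinity>x\<in>A. \<bar>f x\<bar>) \<le> T"
    using infsum_mono[OF abs has_sum_imp_summable[OF assms(1)]] assms by (simp add: infsumI)
qed

lemma summable_on_weighted_bounded:
  fixes c f :: "'a \<Rightarrow> real"
  assumes "(c has_sum S) A" and "\<And>x. x \<in> A \<Longrightarrow> 0 \<le> c x" and "\<And>x. x \<in> A \<Longrightarrow> \<bar>f x\<bar> \<le> B"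
  shows "(\<lambda>x. c x * f x) summable_on A"
  by (rule summable_on_abs_le[OF has_sum_imp_summable[OF has_sum_cmult_left[OF assms(1), of B]]])
     (use assms in \<open>auto simp: abs_mult intro: mult_left_mono\<close>)

lemma has_sum_shift_int:
  "((\<lambda>i. f (i + s)) has_sum S) UNIV \<longleftrightarrow> (f has_sum S) (UNIV :: int set)"
  by (rule has_sum_reindex_bij_witness[where j="\<lambda>i. i + s" and i="\<lambda>i. i - s"]) auto

lemma has_sum_convolution:
  fixes c :: "nat \<Rightarrow> real" and g :: "int \<Rightarrow> real"
  assumes c_nonneg: "\<And>k. 0 \<le> c k" and c_sum: "(c has_sum S) UNIV"
    and g_nonneg: "\<And>j. 0 \<le> g j" and g_sum: "(g has_sum T) UNIV"
  shows "((\<lambda>i. \<Sum>\<^sub>\<infinity>k. c k * g (i + int k)) has_sum S * T) UNIV"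
proof -
  define F where "F = (\<lambda>(k, j). c k * g j)"
  have rows: "((\<lambda>j. F (k, j)) has_sum c k * T) UNIV" for k
    unfolding F_def using has_sum_cmult_right[OF g_sum] by simp
  have row_sums: "((\<lambda>k. c k * T) has_sum S * T) UNIV"
    using has_sum_cmult_left[OF c_sum] by simp
  have "F summable_on UNIV \<times> UNIV"
    using rows has_sum_imp_summable[OF row_sums] c_nonneg g_nonneg
    by (intro summable_on_SigmaI[where g="\<lambda>k. c k * T"]) (auto simp: F_def)
  then have "(F has_sum S * T) (UNIV \<times> UNIV)"
    using rows row_sums by (intro has_sum_SigmaI) auto
  moreover have "((\<lambda>(i, k). c k * g (i + int k)) has_sum S * T) (UNIV \<times> UNIV)
      \<longleftrightarrow> (F has_sum S * T) (UNIV \<times> UNIV)"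
    by (rule has_sum_reindex_bij_witness[where j="\<lambda>(i, k). (k, i + int k)"
          and i="\<lambda>(k, j). (j - int k, k)"]) (auto simp: F_def)
  ultimately have diag: "((\<lambda>(i, k). c k * g (i + int k)) has_sum S * T) (UNIV \<times> UNIV)"
    by simp
  have g_le: "g j \<le> T" for j
    using has_sum_mono'[OF has_sum_finite[of "{j}" g] g_sum] g_nonneg by simp
  have "((\<lambda>k. c k * g (i + int k)) has_sum (\<Sum>\<^sub>\<infinity>k. c k * g (i + int k))) UNIV" for i
    using summable_on_weighted_bounded[OF c_sum, of "\<lambda>k. g (i + int k)" T] c_nonneg g_nonneg g_le
    by (simp add: has_sum_infsum)
  with has_sum_Sigma'[OF diag] show ?thesis by simp
qed

section \<open>Weighted upwind averages\<close>

definition forward_diff :: "(int \<Rightarrow> real) \<Rightarrow> int \<Rightarrow> real" where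
  "forward_diff u i = u (i + 1) - u i"

definition bounded_variation :: "(int \<Rightarrow> real) \<Rightarrow> bool" where
  "bounded_variation u \<longleftrightarrow> (\<lambda>i. \<bar>forward_diff u i\<bar>) summable_on UNIV"

definition total_variation :: "(int \<Rightarrow> real) \<Rightarrow> real" where
  "total_variation u = (\<Sum>\<^sub>\<infinity>i. \<bar>forward_diff u i\<bar>)"

lemma total_variation_has_sum:
  "bounded_variation u \<Longrightarrow> ((\<lambda>i. \<bar>forward_diff u i\<bar>) has_sum total_variation u) UNIV"
  unfolding bounded_variation_def total_variation_def by (rule has_sum_infsum)

locale monotone_weights =
  fixes c :: "nat \<Rightarrow> real"
  assumes c_nonneg: "\<And>k. 0 \<le> c k"
    and c_Suc_le: "\<And>k. c (Suc k) \<le> c k"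
    and c_has_sum: "(c has_sum 1) UNIV"
begin

definition avg :: "(int \<Rightarrow> real) \<Rightarrow> int \<Rightarrow> real" where
  "avg u i = (\<Sum>\<^sub>\<infinity>k. c k * u (i + int k))"

definition c_drop :: "nat \<Rightarrow> real" where
  "c_drop k = c k - c (Suc k)"

lemma c_le_1: "c k \<le> 1"
  using has_sum_mono'[OF has_sum_finite[of "{k}" c] c_has_sum] c_nonneg by simp

lemma c_drop_nonneg: "0 \<le> c_drop k"
  using c_Suc_le[of k] by (simp add: c_drop_def)

lemma c_tendsto_0: "c \<longlonglongrightarrow> 0"
  using summable_LIMSEQ_zero[OF summable_on_imp_summable[OF has_sum_imp_summable[OF c_has_sum]]] .

lemma c_drop_has_sum: "(c_drop has_sum c 0) UNIV"
proof (rule sums_nonneg_imp_has_sum)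
  show "c_drop sums c 0"
    using telescope_sums'[OF c_tendsto_0] unfolding c_drop_def by simp
qed (rule c_drop_nonneg)

lemma summable_weighted:
  assumes "\<And>k. \<bar>f k\<bar> \<le> B"
  shows "(\<lambda>k. c k * f k) summable_on UNIV" and "(\<lambda>k. c_drop k * f k) summable_on UNIV"
  using summable_on_weighted_bounded[OF c_has_sum] summable_on_weighted_bounded[OF c_drop_has_sum]
    c_nonneg c_drop_nonneg assms by auto

lemma avg_const: "avg (\<lambda>_. b) i = b"
  unfolding avg_def using infsumI[OF has_sum_cmult_left[OF c_has_sum, of b]] by simp

lemma avg_bounds:
  assumes "\<And>j. lo \<le> u j" and "\<And>j. u j \<le> hi"
  shows "lo \<le> avg u i" and "avg u i \<le> hi"
proof -
  have "\<bar>u j\<bar> \<le> \<bar>lo\<bar> + \<bar>hi\<bar>" for j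
    using assms[of j] by auto
  then have sum_u: "(\<lambda>k. c k * u (i + int k)) summable_on UNIV"
    by (rule summable_weighted(1))
  have "(\<lambda>k. c k * b) summable_on UNIV" for b
    by (rule summable_weighted(1)[of _ "\<bar>b\<bar>"]) simp
  note sum_const = this[of lo] this[of hi]
  have "avg (\<lambda>_. lo) i \<le> avg u i"
    unfolding avg_def by (rule infsum_mono[OF sum_const(1) sum_u]) (simp add: c_nonneg assms mult_left_mono)
  then show "lo \<le> avg u i" by (simp add: avg_const)
  have "avg u i \<le> avg (\<lambda>_. hi) i"
    unfolding avg_def by (rule infsum_mono[OF sum_u sum_const(2)]) (simp add: c_nonneg assms mult_left_mono)
  then show "avg u i \<le> hi" by (simp add: avg_const)
qed

lemma forward_diff_avg:
  assumes "\<And>j. \<bar>u j\<bar> \<le> B"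
  shows "forward_diff (avg u) i = avg (forward_diff u) i"
proof -
  have "((\<lambda>k. c k * u (i + 1 + int k) - c k * u (i + int k))
      has_sum avg u (i + 1) - avg u i) UNIV"
    unfolding avg_def using assms
    by (intro has_sum_diff has_sum_infsum summable_weighted(1)) auto
  then show ?thesis
    unfolding forward_diff_def avg_def by (intro infsumI[symmetric]) (simp add: algebra_simps)
qed

lemma infsum_summation_by_parts:
  assumes bdd: "\<And>k. \<bar>E k\<bar> \<le> B"
  shows "(\<Sum>\<^sub>\<infinity>k. c k * (E (Suc k) - E k)) = (\<Sum>\<^sub>\<infinity>k. c_drop k * E (Suc k)) - c 0 * E 0"
proof -
  have "\<bar>E (Suc k) - E k\<bar> \<le> 2 * B" for k
    using bdd[of k] bdd[of "Suc k"] by linarith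
  then have lhs: "(\<lambda>k. c k * (E (Suc k) - E k)) sums (\<Sum>\<^sub>\<infinity>k. c k * (E (Suc k) - E k))"
    by (intro has_sum_imp_sums has_sum_infsum summable_weighted(1))
  have rhs: "(\<lambda>k. c_drop k * E (Suc k)) sums (\<Sum>\<^sub>\<infinity>k. c_drop k * E (Suc k))"
    using bdd by (intro has_sum_imp_sums has_sum_infsum summable_weighted(2))
  have partial: "(\<Sum>k<N. c k * (E (Suc k) - E k))
      = (\<Sum>k<N. c_drop k * E (Suc k)) + c N * E N - c 0 * E 0" for N
    by (induction N) (simp_all add: c_drop_def algebra_simps)
  have "(\<lambda>N. c N * E N) \<longlonglongrightarrow> 0"
  proof (rule Lim_null_comparison)
    show "\<forall>\<^sub>F N in sequentially. norm (c N * E N) \<le> c N * B"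
      using bdd c_nonneg by (simp add: abs_mult mult_left_mono)
    show "(\<lambda>N. c N * B) \<longlonglongrightarrow> 0"
      using tendsto_mult_left_zero[OF c_tendsto_0] .
  qed
  with rhs have "(\<lambda>N. \<Sum>k<N. c k * (E (Suc k) - E k))
      \<longlonglongrightarrow> (\<Sum>\<^sub>\<infinity>k. c_drop k * E (Suc k)) + 0 - c 0 * E 0"
    unfolding partial sums_def by (intro tendsto_intros)
  with lhs show ?thesis
    unfolding sums_def by (simp add: LIMSEQ_unique)
qed

lemma avg_forward_diff_by_parts:
  assumes "\<And>j. \<bar>u j\<bar> \<le> B"
  shows "avg (forward_diff u) i = (\<Sum>\<^sub>\<infinity>k. c_drop k * u (i + int k + 1)) - c 0 * u i"
  using infsum_summation_by_parts[of "\<lambda>k. u (i + int k)" B] assms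
  by (simp add: avg_def forward_diff_def ac_simps)

lemma avg_forward_diff_le:
  assumes "\<And>j. \<bar>u j\<bar> \<le> B" and "\<And>j. u j - u i \<le> K"
  shows "avg (forward_diff u) i \<le> c 0 * K"
proof -
  have const: "((\<lambda>k. c_drop k * (u i + K)) has_sum c 0 * (u i + K)) UNIV"
    by (rule has_sum_cmult_left[OF c_drop_has_sum])
  have "(\<Sum>\<^sub>\<infinity>k. c_drop k * u (i + int k + 1)) \<le> (\<Sum>\<^sub>\<infinity>k. c_drop k * (u i + K))"
    using summable_weighted(2)[OF assms(1)] has_sum_imp_summable[OF const]
  proof (rule infsum_mono)
    show "c_drop k * u (i + int k + 1) \<le> c_drop k * (u i + K)" for k
      using assms(2)[of "i + int k + 1"] c_drop_nonneg[of k] by (simp add: mult_left_mono)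
  qed
  also have "\<dots> = c 0 * (u i + K)"
    by (rule infsumI[OF const])
  finally show ?thesis
    using avg_forward_diff_by_parts[of u B i] assms(1) by (simp add: algebra_simps)
qed

lemma avg_forward_diff_ge:
  assumes "\<And>j. \<bar>u j\<bar> \<le> B" and "\<And>j. K \<le> u j - u i"
  shows "c 0 * K \<le> avg (forward_diff u) i"
proof -
  have "avg (forward_diff (\<lambda>j. - u j)) i \<le> c 0 * - K"
  proof (rule avg_forward_diff_le)
    show "\<bar>- u j\<bar> \<le> B" for j using assms(1)[of j] by simp
    show "- u j - - u i \<le> - K" for j using assms(2)[of j] by simp
  qed
  moreover have "avg (forward_diff (\<lambda>j. - u j)) i = - avg (forward_diff u) i"
    unfolding avg_def forward_diff_def using infsum_uminus[of "\<lambda>k. c k * (u (i + int k + 1) - u (i + int k))"]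
    by (simp add: algebra_simps)
  ultimately show ?thesis by simp
qed

lemma abs_avg_le:
  assumes "\<And>j. \<bar>v j\<bar> \<le> r j" and "\<And>j. r j \<le> B"
  shows "\<bar>avg v i\<bar> \<le> avg r i"
  unfolding avg_def
proof (rule abs_infsum_le)
  show "(\<lambda>k. c k * r (i + int k)) summable_on UNIV"
    using assms by (intro summable_weighted(1)[where B=B]) (smt (verit))
  show "\<bar>c k * v (i + int k)\<bar> \<le> c k * r (i + int k)" for k
    using assms(1) c_nonneg by (simp add: abs_mult mult_left_mono)
qed

lemma has_sum_avg:
  assumes "\<And>j. 0 \<le> g j" and "(g has_sum T) UNIV"
  shows "(avg g has_sum T) UNIV"
  using has_sum_convolution[OF c_nonneg c_has_sum assms] by (simp add: avg_def[abs_def])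

lemma bounded_variation_avg:
  assumes "\<And>j. \<bar>u j\<bar> \<le> B" and "bounded_variation u"
  shows "bounded_variation (avg u)" and "total_variation (avg u) \<le> total_variation u"
proof -
  have "\<bar>forward_diff u j\<bar> \<le> 2 * B" for j
    using assms(1)[of j] assms(1)[of "j + 1"] by (simp add: forward_diff_def)
  then have "\<bar>avg (forward_diff u) i\<bar> \<le> avg (\<lambda>j. \<bar>forward_diff u j\<bar>) i" for i
    by (intro abs_avg_le) auto
  then have "\<bar>forward_diff (avg u) i\<bar> \<le> avg (\<lambda>j. \<bar>forward_diff u j\<bar>) i" for i
    by (simp add: forward_diff_avg[of u B] assms(1))
  moreover have "(avg (\<lambda>j. \<bar>forward_diff u j\<bar>) has_sum total_variation u) UNIV"
    using assms(2) by (intro has_sum_avg total_variation_has_sum) auto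
  ultimately show "bounded_variation (avg u)" and "total_variation (avg u) \<le> total_variation u"
    unfolding bounded_variation_def total_variation_def using abs_summable_on_dominated by blast+
qed

end

section \<open>The monotone nonlocal scheme\<close>

locale nonlocal_scheme = monotone_weights c for c :: "nat \<Rightarrow> real" +
  fixes W :: "real \<Rightarrow> real" and lam L :: real
  assumes W_mono: "\<And>a b. 1 \<le> a \<Longrightarrow> a \<le> b \<Longrightarrow> W a \<le> W b"
    and W_lipschitz: "\<And>a b. 1 \<le> a \<Longrightarrow> a \<le> b \<Longrightarrow> W b - W a \<le> L * (b - a)"
    and lam_nonneg: "0 \<le> lam" and L_nonneg: "0 \<le> L"
    and CFL: "lam * L \<le> 1"
begin

(* avg (\<lambda>j. W (w j)) i is the nonlocal flux Wbar_{i-1/2} of the paper. *)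
definition step :: "(int \<Rightarrow> real) \<Rightarrow> int \<Rightarrow> real" where
  "step w i = w i + lam * forward_diff (avg (\<lambda>j. W (w j))) i"

lemma abs_W_diff_le:
  assumes "\<And>a b. 1 \<le> a \<Longrightarrow> a \<le> b \<Longrightarrow> W b - W a \<le> K * (b - a)"
    and "1 \<le> x" and "1 \<le> y"
  shows "\<bar>W y - W x\<bar> \<le> K * \<bar>y - x\<bar>"
proof (cases "x \<le> y")
  case True
  then show ?thesis using assms(1)[of x y] assms(2) W_mono[of x y] by simp
next
  case False
  then show ?thesis using assms(1)[of y x] assms(3) W_mono[of y x] by simp
qed

lemma W_diff_sign: "1 \<le> x \<Longrightarrow> 1 \<le> y \<Longrightarrow> 0 \<le> (y - x) * (W y - W x)"
  using W_mono[of x y] W_mono[of y x] by (cases "x \<le> y") (auto simp: mult_nonpos_nonpos)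

lemma abs_W_le:
  assumes "1 \<le> m" and "m \<le> x" and "x \<le> M"
  shows "\<bar>W x\<bar> \<le> \<bar>W m\<bar> + \<bar>W M\<bar>"
  using W_mono[of m x] W_mono[of x M] assms by auto

lemma CFL_c0: "lam * c 0 * L \<le> 1"
  using mult_mono[OF c_le_1[of 0] CFL] c_nonneg lam_nonneg L_nonneg by (simp add: ac_simps)

lemma step_eq_avg_forward_diff:
  assumes "\<And>j. \<bar>W (w j)\<bar> \<le> B"
  shows "step w i = w i + lam * avg (forward_diff (\<lambda>j. W (w j))) i"
  using forward_diff_avg[of "\<lambda>j. W (w j)" B] assms by (simp add: step_def)

lemma step_le_max:
  assumes lo: "\<And>j. m \<le> w j" and hi: "\<And>j. w j \<le> M" and m: "1 \<le> m"
  shows "step w i \<le> M"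
proof -
  have w1: "1 \<le> w j" for j using lo[of j] m by linarith
  have bdd: "\<bar>W (w j)\<bar> \<le> \<bar>W m\<bar> + \<bar>W M\<bar>" for j
    using abs_W_le m lo hi by blast
  have "W (w j) - W (w i) \<le> L * (M - w i)" for j
  proof (cases "w i \<le> w j")
    case True
    then have "W (w j) - W (w i) \<le> L * (w j - w i)"
      using W_lipschitz w1 by blast
    also have "\<dots> \<le> L * (M - w i)"
      using L_nonneg hi[of j] by (simp add: mult_left_mono)
    finally show ?thesis .
  next
    case False
    then show ?thesis
      using W_mono[of "w j" "w i"] w1[of j] mult_nonneg_nonneg[OF L_nonneg, of "M - w i"] hi[of i]
      by simp
  qed
  then have "avg (forward_diff (\<lambda>j. W (w j))) i \<le> c 0 * (L * (M - w i))"
    using bdd by (intro avg_forward_diff_le)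
  then have "lam * avg (forward_diff (\<lambda>j. W (w j))) i \<le> lam * (c 0 * (L * (M - w i)))"
    using lam_nonneg by (rule mult_left_mono)
  also have "\<dots> = (lam * c 0 * L) * (M - w i)"
    by (simp add: ac_simps)
  also have "\<dots> \<le> M - w i"
    using CFL_c0 c_nonneg lam_nonneg L_nonneg hi[of i] by (simp add: mult_left_le_one_le)
  finally show ?thesis
    using step_eq_avg_forward_diff[OF bdd] by simp
qed

lemma step_ge_min:
  assumes lo: "\<And>j. m \<le> w j" and hi: "\<And>j. w j \<le> M" and m: "1 \<le> m"
  shows "m \<le> step w i"
proof -
  have w1: "1 \<le> w j" for j using lo[of j] m by linarith
  have bdd: "\<bar>W (w j)\<bar> \<le> \<bar>W m\<bar> + \<bar>W M\<bar>" for j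
    using abs_W_le m lo hi by blast
  have "- (L * (w i - m)) \<le> W (w j) - W (w i)" for j
  proof (cases "w j \<le> w i")
    case True
    then have "W (w i) - W (w j) \<le> L * (w i - w j)"
      using W_lipschitz w1 by blast
    also have "\<dots> \<le> L * (w i - m)"
      using L_nonneg lo[of j] by (simp add: mult_left_mono)
    finally show ?thesis by simp
  next
    case False
    then show ?thesis
      using W_mono[of "w i" "w j"] w1[of i] mult_nonneg_nonneg[OF L_nonneg, of "w i - m"] lo[of i]
      by simp
  qed
  then have "c 0 * - (L * (w i - m)) \<le> avg (forward_diff (\<lambda>j. W (w j))) i"
    using bdd by (intro avg_forward_diff_ge)
  then have "lam * (c 0 * - (L * (w i - m))) \<le> lam * avg (forward_diff (\<lambda>j. W (w j))) i"
    using lam_nonneg by (rule mult_left_mono)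
  then have "- ((lam * c 0 * L) * (w i - m)) \<le> lam * avg (forward_diff (\<lambda>j. W (w j))) i"
    by (simp add: ac_simps)
  moreover have "(lam * c 0 * L) * (w i - m) \<le> w i - m"
    using CFL_c0 c_nonneg lam_nonneg L_nonneg lo[of i] by (simp add: mult_left_le_one_le)
  ultimately show ?thesis
    using step_eq_avg_forward_diff[OF bdd] by simp
qed

lemma abs_diff_sub_flux_diff:
  assumes "1 \<le> x" and "1 \<le> y"
  shows "\<bar>(y - x) - lam * c 0 * (W y - W x)\<bar> = \<bar>y - x\<bar> - lam * c 0 * \<bar>W y - W x\<bar>"
proof -
  have t: "0 \<le> lam * c 0" using lam_nonneg c_nonneg by simp
  have "0 \<le> (lam * c 0) * ((y - x) * (W y - W x))"
    using W_diff_sign[OF assms] t by simp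
  then have sign: "0 \<le> (y - x) * (lam * c 0 * (W y - W x))"
    by (simp only: ac_simps)
  have "lam * c 0 * \<bar>W y - W x\<bar> \<le> lam * c 0 * (L * \<bar>y - x\<bar>)"
    using abs_W_diff_le[OF W_lipschitz assms] t by (rule mult_left_mono)
  also have "\<dots> = (lam * c 0 * L) * \<bar>y - x\<bar>"
    by (simp only: ac_simps)
  also have "\<dots> \<le> \<bar>y - x\<bar>"
    using CFL_c0 t L_nonneg by (simp add: mult_left_le_one_le)
  finally have "\<bar>lam * c 0 * (W y - W x)\<bar> \<le> \<bar>y - x\<bar>"
    by (simp only: abs_mult[of "lam * c 0"] abs_of_nonneg[OF t])
  with sign show ?thesis
    by (simp only: abs_diff_same_sign abs_mult[of "lam * c 0"] abs_of_nonneg[OF t])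
qed

lemma abs_forward_diff_step_le:
  assumes lo: "\<And>j. m \<le> w j" and hi: "\<And>j. w j \<le> M" and m: "1 \<le> m"
  defines "dG \<equiv> forward_diff (\<lambda>j. W (w j))"
  shows "\<bar>forward_diff (step w) i\<bar> \<le> \<bar>forward_diff w i\<bar> - lam * c 0 * \<bar>dG i\<bar>
           + lam * (\<Sum>\<^sub>\<infinity>k. c_drop k * \<bar>dG (i + int k + 1)\<bar>)"
proof -
  define D where "D = forward_diff w"
  define B where "B = \<bar>W m\<bar> + \<bar>W M\<bar>"
  have w1: "1 \<le> w j" for j using lo[of j] m by linarith
  have bdd: "\<bar>W (w j)\<bar> \<le> B" for j
    unfolding B_def using abs_W_le m lo hi by blast
  have dG_bdd: "\<bar>dG j\<bar> \<le> 2 * B" for j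
    using bdd[of j] bdd[of "j + 1"] by (simp add: dG_def forward_diff_def)
  define Y where "Y = (\<Sum>\<^sub>\<infinity>k. c_drop k * dG (i + int k + 1))"
  have by_parts: "avg (forward_diff dG) i = Y - c 0 * dG i"
    unfolding Y_def using avg_forward_diff_by_parts[of dG "2 * B" i] dG_bdd by simp
  have "forward_diff (step w) i = D i + lam * forward_diff (avg dG) i"
    using step_eq_avg_forward_diff[of w B i] step_eq_avg_forward_diff[of w B "i + 1"] bdd
    by (simp add: D_def dG_def forward_diff_def algebra_simps)
  also have "\<dots> = D i + lam * avg (forward_diff dG) i"
    using forward_diff_avg[of dG "2 * B"] dG_bdd by simp
  also have "\<dots> = (D i - lam * c 0 * dG i) + lam * Y"
    by (simp add: by_parts algebra_simps)
  finally have "\<bar>forward_diff (step w) i\<bar> \<le> \<bar>D i - lam * c 0 * dG i\<bar> + lam * \<bar>Y\<bar>"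
    using lam_nonneg by (metis abs_mult abs_of_nonneg abs_triangle_ineq)
  also have "\<bar>D i - lam * c 0 * dG i\<bar> = \<bar>D i\<bar> - lam * c 0 * \<bar>dG i\<bar>"
    using abs_diff_sub_flux_diff[OF w1 w1] by (simp add: D_def dG_def forward_diff_def)
  also have "\<bar>Y\<bar> \<le> (\<Sum>\<^sub>\<infinity>k. c_drop k * \<bar>dG (i + int k + 1)\<bar>)"
    unfolding Y_def using dG_bdd c_drop_nonneg
    by (intro abs_infsum_le summable_weighted(2)[where B="2 * B"]) (auto simp: abs_mult)
  finally show ?thesis
    using lam_nonneg by (simp add: D_def mult_left_mono)
qed

lemma bounded_variation_step:
  assumes lo: "\<And>j. m \<le> w j" and hi: "\<And>j. w j \<le> M" and m: "1 \<le> m"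
    and bv: "bounded_variation w"
  shows "bounded_variation (step w)" and "total_variation (step w) \<le> total_variation w"
proof -
  define dG where "dG = forward_diff (\<lambda>j. W (w j))"
  have w1: "1 \<le> w j" for j using lo[of j] m by linarith
  have dG_le: "\<bar>dG j\<bar> \<le> L * \<bar>forward_diff w j\<bar>" for j
    using abs_W_diff_le[OF W_lipschitz w1 w1] by (simp add: dG_def forward_diff_def)
  have "(\<lambda>j. \<bar>dG j\<bar>) summable_on UNIV"
  proof (rule summable_on_abs_le)
    show "(\<lambda>j. L * \<bar>forward_diff w j\<bar>) summable_on UNIV"
      using bv unfolding bounded_variation_def by (rule summable_on_cmult_right)
  qed (simp add: dG_le)
  then obtain TG where TG: "((\<lambda>j. \<bar>dG j\<bar>) has_sum TG) UNIV"
    using has_sum_infsum by blast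
  have "((\<lambda>j. \<bar>dG (j + 1)\<bar>) has_sum TG) UNIV"
    using has_sum_shift_int[of "\<lambda>j. \<bar>dG j\<bar>" 1 TG] TG by simp
  then have "((\<lambda>i. \<Sum>\<^sub>\<infinity>k. c_drop k * \<bar>dG (i + int k + 1)\<bar>) has_sum c 0 * TG) UNIV"
    using has_sum_convolution[OF c_drop_nonneg c_drop_has_sum, of "\<lambda>j. \<bar>dG (j + 1)\<bar>"] by simp
  then have "((\<lambda>i. (\<bar>forward_diff w i\<bar> - lam * c 0 * \<bar>dG i\<bar>)
        + lam * (\<Sum>\<^sub>\<infinity>k. c_drop k * \<bar>dG (i + int k + 1)\<bar>))
      has_sum (total_variation w - lam * c 0 * TG) + lam * (c 0 * TG)) UNIV"
    using total_variation_has_sum[OF bv] TG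
    by (intro has_sum_add has_sum_diff has_sum_cmult_right)
  then have R: "((\<lambda>i. \<bar>forward_diff w i\<bar> - lam * c 0 * \<bar>dG i\<bar>
        + lam * (\<Sum>\<^sub>\<infinity>k. c_drop k * \<bar>dG (i + int k + 1)\<bar>)) has_sum total_variation w) UNIV"
    by simp
  have "\<bar>forward_diff (step w) i\<bar> \<le> \<bar>forward_diff w i\<bar> - lam * c 0 * \<bar>dG i\<bar>
      + lam * (\<Sum>\<^sub>\<infinity>k. c_drop k * \<bar>dG (i + int k + 1)\<bar>)" for i
    unfolding dG_def by (rule abs_forward_diff_step_le[OF lo hi m])
  with abs_summable_on_dominated[OF R]
  show "bounded_variation (step w)" and "total_variation (step w) \<le> total_variation w"
    unfolding bounded_variation_def total_variation_def by blast+
qed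

lemma step_increment:
  assumes lo: "\<And>j. m \<le> w j" and hi: "\<And>j. w j \<le> M" and m: "1 \<le> m"
    and bv: "bounded_variation w"
    and K: "0 \<le> K" "\<And>a b. 1 \<le> a \<Longrightarrow> a \<le> b \<Longrightarrow> W b - W a \<le> K * (b - a)"
  shows "(\<lambda>i. \<bar>step w i - w i\<bar>) summable_on UNIV"
    and "(\<Sum>\<^sub>\<infinity>i. \<bar>step w i - w i\<bar>) \<le> lam * K * total_variation w"
proof -
  have w1: "1 \<le> w j" for j using lo[of j] m by linarith
  have bdd: "\<bar>W (w j)\<bar> \<le> \<bar>W m\<bar> + \<bar>W M\<bar>" for j
    using abs_W_le m lo hi by blast
  have "\<bar>forward_diff (\<lambda>j. W (w j)) j\<bar> \<le> K * \<bar>forward_diff w j\<bar>" for j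
    using abs_W_diff_le[OF K(2) w1 w1] by (simp add: forward_diff_def)
  moreover have "K * \<bar>forward_diff w j\<bar> \<le> K * (M - m)" for j
    using K(1) lo[of j] hi[of j] lo[of "j + 1"] hi[of "j + 1"]
    by (intro mult_left_mono) (auto simp: forward_diff_def abs_le_iff)
  ultimately have "\<bar>avg (forward_diff (\<lambda>j. W (w j))) i\<bar> \<le> avg (\<lambda>j. K * \<bar>forward_diff w j\<bar>) i" for i
    by (rule abs_avg_le)
  then have "\<bar>step w i - w i\<bar> \<le> lam * avg (\<lambda>j. K * \<bar>forward_diff w j\<bar>) i" for i
    using step_eq_avg_forward_diff[of w "\<bar>W m\<bar> + \<bar>W M\<bar>" i] bdd lam_nonneg
    by (simp add: abs_mult mult_left_mono)
  moreover have "((\<lambda>i. lam * avg (\<lambda>j. K * \<bar>forward_diff w j\<bar>) i)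
      has_sum lam * K * total_variation w) UNIV"
    using K(1) has_sum_cmult_right[OF has_sum_avg[OF _ has_sum_cmult_right[OF total_variation_has_sum[OF bv]]]]
    by (simp add: ac_simps)
  ultimately show "(\<lambda>i. \<bar>step w i - w i\<bar>) summable_on UNIV"
    and "(\<Sum>\<^sub>\<infinity>i. \<bar>step w i - w i\<bar>) \<le> lam * K * total_variation w"
    using abs_summable_on_dominated[where f="\<lambda>i. step w i - w i"] by blast+
qed

lemma iterate_bounds_variation:
  assumes lo: "\<And>j. m \<le> u j" and hi: "\<And>j. u j \<le> M" and m: "1 \<le> m"
    and bv: "bounded_variation u"
  shows "(\<forall>j. m \<le> (step ^^ n) (avg u) j \<and> (step ^^ n) (avg u) j \<le> M)
    \<and> bounded_variation ((step ^^ n) (avg u))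
    \<and> total_variation ((step ^^ n) (avg u)) \<le> total_variation u"
proof (induction n)
  case 0
  have "\<bar>u j\<bar> \<le> \<bar>m\<bar> + \<bar>M\<bar>" for j
    using lo[of j] hi[of j] by auto
  with bv have "bounded_variation (avg u) \<and> total_variation (avg u) \<le> total_variation u"
    using bounded_variation_avg by blast
  then show ?case
    using avg_bounds[of m u M] lo hi by auto
next
  case (Suc n)
  define w where "w = (step ^^ n) (avg u)"
  have lo': "\<And>j. m \<le> w j" and hi': "\<And>j. w j \<le> M" and bv': "bounded_variation w"
    and tv: "total_variation w \<le> total_variation u"
    using Suc.IH by (auto simp: w_def)
  show ?case
    using step_ge_min[of m w, OF lo' hi' m] step_le_max[of m w, OF lo' hi' m]
      bounded_variation_step[of m w, OF lo' hi' m bv'] tv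
    by (auto simp: w_def)
qed

lemma iterate_increment:
  fixes n :: nat
  assumes lo: "\<And>j. m \<le> u j" and hi: "\<And>j. u j \<le> M" and m: "1 \<le> m"
    and bv: "bounded_variation u"
    and K: "0 \<le> K" "\<And>a b. 1 \<le> a \<Longrightarrow> a \<le> b \<Longrightarrow> W b - W a \<le> K * (b - a)"
  defines "w \<equiv> (step ^^ n) (avg u)"
  shows "(\<lambda>i. \<bar>step w i - w i\<bar>) summable_on UNIV"
    and "(\<Sum>\<^sub>\<infinity>i. \<bar>step w i - w i\<bar>) \<le> lam * K * total_variation u"
proof -
  have lo': "\<And>j. m \<le> w j" and hi': "\<And>j. w j \<le> M" and bv': "bounded_variation w"
    and tv: "total_variation w \<le> total_variation u"
    using iterate_bounds_variation[OF lo hi m bv, of n] by (auto simp: w_def)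
  show "(\<lambda>i. \<bar>step w i - w i\<bar>) summable_on UNIV"
    by (rule step_increment(1)[OF lo' hi' m bv' K])
  have "(\<Sum>\<^sub>\<infinity>i. \<bar>step w i - w i\<bar>) \<le> lam * K * total_variation w"
    by (rule step_increment(2)[OF lo' hi' m bv' K])
  also have "\<dots> \<le> lam * K * total_variation u"
    using tv lam_nonneg K(1) by (simp add: mult_left_mono)
  finally show "(\<Sum>\<^sub>\<infinity>i. \<bar>step w i - w i\<bar>) \<le> lam * K * total_variation u" .
qed

end

section \<open>Kernel weights\<close>

definition kernel_weight :: "(real \<Rightarrow> real) \<Rightarrow> real \<Rightarrow> real \<Rightarrow> nat \<Rightarrow> real" where
  "kernel_weight Phi \<alpha> dz k = integral {real k * dz .. real (Suc k) * dz} (Phi_alpha Phi \<alpha>)"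

locale kernel =
  fixes Phi :: "real \<Rightarrow> real" and \<alpha> dz :: real
  assumes Phi_nonneg: "\<forall>z\<ge>0. Phi z \<ge> 0"
    and Phi_noninc: "\<forall>x y. 0 \<le> x \<longrightarrow> x \<le> y \<longrightarrow> Phi y \<le> Phi x"
    and Phi_int: "(Phi has_integral 1) {0..}"
    and alpha_pos: "\<alpha> > 0"
    and dz_pos: "dz > 0"
begin

abbreviation "c \<equiv> kernel_weight Phi \<alpha> dz"

lemma Phi_alpha_nonneg: "0 \<le> x \<Longrightarrow> 0 \<le> Phi_alpha Phi \<alpha> x"
  using Phi_nonneg alpha_pos unfolding Phi_alpha_def by auto

lemma Phi_alpha_antimono: "0 \<le> x \<Longrightarrow> x \<le> y \<Longrightarrow> Phi_alpha Phi \<alpha> y \<le> Phi_alpha Phi \<alpha> x"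
  using Phi_noninc alpha_pos unfolding Phi_alpha_def by (simp add: divide_right_mono)

lemma Phi_alpha_integrable: "0 \<le> x \<Longrightarrow> Phi_alpha Phi \<alpha> integrable_on {x..y}"
  by (rule antimono_integrable_on) (auto intro: Phi_alpha_antimono)

lemma integral_Phi_alpha:
  assumes "0 \<le> b" shows "integral {0..b} (Phi_alpha Phi \<alpha>) = integral {0..b/\<alpha>} Phi"
proof -
  have "(\<lambda>x. x / (1/\<alpha>)) ` {0..b/\<alpha>} = {0..b}"
    using alpha_pos by (auto simp: image_iff field_simps intro!: bexI[where x="_ / \<alpha>"])
  then have "integral {0..b} (\<lambda>x. Phi (1/\<alpha> * x)) = \<alpha> * integral {0..b/\<alpha>} Phi"
    using integral_stretch_real[of "1/\<alpha>" 0 "b/\<alpha>" Phi] alpha_pos by simp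
  then show ?thesis
    using alpha_pos unfolding Phi_alpha_def by simp
qed

lemma grid_point_le_imp_nonneg: "real k * dz \<le> x \<Longrightarrow> 0 \<le> x"
  using dz_pos by (meson order_trans of_nat_0_le_iff zero_le_mult_iff less_imp_le)

lemma kernel_weight_nonneg: "0 \<le> c k"
  unfolding kernel_weight_def using grid_point_le_imp_nonneg[of k]
  by (intro integral_nonneg Phi_alpha_integrable Phi_alpha_nonneg) auto

lemma kernel_weight_Suc_le: "c (Suc k) \<le> c k"
proof -
  have "c (Suc k) = integral {real k * dz .. real (Suc k) * dz} (\<lambda>x. Phi_alpha Phi \<alpha> (x + dz))"
    unfolding kernel_weight_def
    using integral_shift_real_ivl[of "real (Suc k) * dz" dz "real (Suc (Suc k)) * dz" "Phi_alpha Phi \<alpha>"]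
    by (simp add: algebra_simps)
  also have "\<dots> \<le> c k"
    using dz_pos grid_point_le_imp_nonneg[of k] unfolding kernel_weight_def
    by (intro integral_le Phi_alpha_integrable antimono_integrable_on Phi_alpha_antimono) auto
  finally show ?thesis .
qed

lemma sum_kernel_weight: "(\<Sum>k<N. c k) = integral {0..real N * dz} (Phi_alpha Phi \<alpha>)"
proof (induction N)
  case (Suc N)
  have "integral {0..real N * dz} (Phi_alpha Phi \<alpha>) + c N = integral {0..real (Suc N) * dz} (Phi_alpha Phi \<alpha>)"
    unfolding kernel_weight_def using dz_pos
    by (intro Henstock_Kurzweil_Integration.integral_combine Phi_alpha_integrable) auto
  then show ?case using Suc by simp
qed simp

lemma kernel_weight_has_sum: "(c has_sum 1) UNIV"
proof (rule sums_nonneg_imp_has_sum)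
  have "filterlim (\<lambda>N. dz / \<alpha> * real N) at_top sequentially"
    using dz_pos alpha_pos
    by (intro filterlim_tendsto_pos_mult_at_top[OF tendsto_const _ filterlim_real_sequentially]) auto
  moreover have "((\<lambda>b. integral {0..b} Phi) \<longlongrightarrow> 1) at_top"
    using Phi_nonneg by (intro integral_tendsto_at_top_nonneg[OF Phi_int]) auto
  ultimately have "(\<lambda>N. integral {0..dz / \<alpha> * real N} Phi) \<longlonglongrightarrow> 1"
    by (rule filterlim_compose[rotated])
  moreover have "(\<Sum>k<N. c k) = integral {0..dz / \<alpha> * real N} Phi" for N
  proof -
    have "(\<Sum>k<N. c k) = integral {0..real N * dz / \<alpha>} Phi"
      using integral_Phi_alpha[of "real N * dz"] dz_pos sum_kernel_weight[of N] by simp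
    also have "real N * dz / \<alpha> = dz / \<alpha> * real N" by simp
    finally show ?thesis .
  qed
  ultimately show "c sums 1"
    by (simp add: sums_def)
qed (rule kernel_weight_nonneg)

lemma Phi_coef_eq_kernel_weight: "Phi_coef Phi \<alpha> dz i (i + int k) = c k"
proof -
  define s where "s = (real_of_int i - 1) * dz"
  have "zpt dz (real_of_int (i + int k) - 1/2) = real k * dz - - s"
    "zpt dz (real_of_int (i + int k) + 1/2) = real (Suc k) * dz - - s"
    "zpt dz (real_of_int i - 1/2) = s"
    unfolding zpt_def s_def by (auto simp: algebra_simps)
  then have "Phi_coef Phi \<alpha> dz i (i + int k)
      = integral {real k * dz - - s .. real (Suc k) * dz - - s} (\<lambda>x. Phi_alpha Phi \<alpha> (x + - s))"
    unfolding Phi_coef_def by simp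
  also have "\<dots> = c k"
    unfolding kernel_weight_def by (rule integral_shift_real_ivl)
  finally show ?thesis .
qed

lemma infsum_Phi_coef:
  "(\<Sum>\<^sub>\<infinity>j\<in>{i..}. Phi_coef Phi \<alpha> dz i j * f j) = (\<Sum>\<^sub>\<infinity>k. c k * f (i + int k))"
proof (rule infsum_reindex_bij_witness[where j="\<lambda>j. nat (j - i)" and i="\<lambda>k. i + int k"])
  fix j assume "j \<in> {i..}"
  then show "c (nat (j - i)) * f (i + int (nat (j - i))) = Phi_coef Phi \<alpha> dz i j * f j"
    using Phi_coef_eq_kernel_weight[of i "nat (j - i)"] by simp
qed auto

end

section \<open>The flux W(w) = V(1/w)\<close>

locale flux =
  fixes V V' :: "real \<Rightarrow> real"
  assumes V_deriv: "\<forall>x\<ge>0. (V has_real_derivative V' x) (at x within {0..})"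
    and V'_cont: "continuous_on {0..} V'"
    and V_noninc: "\<forall>x y. 0 \<le> x \<longrightarrow> x \<le> y \<longrightarrow> V y \<le> V x"
begin

lemma Wf_has_real_derivative:
  assumes "0 < w"
  shows "(Wf V has_real_derivative V' (inverse w) * - (inverse w ^ 2)) (at w)"
proof -
  have "(V has_real_derivative V' (inverse w)) (at (inverse w) within {0..})"
    using V_deriv assms by (simp add: less_imp_le)
  then have "(V has_real_derivative V' (inverse w)) (at (inverse w) within {0<..})"
    by (rule has_field_derivative_subset) auto
  then have "(V has_real_derivative V' (inverse w)) (at (inverse w))"
    using at_within_open[of "inverse w" "{0<..}"] assms by simp
  from DERIV_chain'[OF DERIV_inverse this] assms
  have "((\<lambda>x. V (inverse x)) has_real_derivative V' (inverse w) * - (inverse w ^ 2)) (at w)"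
    by (simp add: numeral_2_eq_2)
  moreover have "Wf V = (\<lambda>x. V (inverse x))"
    by (simp add: Wf_def[abs_def] inverse_eq_divide)
  ultimately show ?thesis by simp
qed

lemma Wf_mono: "1 \<le> a \<Longrightarrow> a \<le> b \<Longrightarrow> Wf V a \<le> Wf V b"
  using V_noninc unfolding Wf_def by (simp add: frac_le)

lemma abs_deriv_Wf_bounded: "\<exists>B. \<forall>w\<ge>1. \<bar>deriv (Wf V) w\<bar> \<le> B"
proof -
  have "compact (V' ` {0..1})"
    by (intro compact_continuous_image continuous_on_subset[OF V'_cont]) auto
  then obtain B where B: "\<And>x. x \<in> {0..1} \<Longrightarrow> \<bar>V' x\<bar> \<le> B"
    using compact_imp_bounded by (force simp: bounded_iff)
  have "\<bar>deriv (Wf V) w\<bar> \<le> B" if "1 \<le> w" for w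
  proof -
    have "deriv (Wf V) w = V' (inverse w) * - (inverse w ^ 2)"
      using Wf_has_real_derivative[of w] that by (intro DERIV_imp_deriv) simp
    then have "\<bar>deriv (Wf V) w\<bar> = \<bar>V' (inverse w)\<bar> * inverse w ^ 2"
      by (simp add: abs_mult)
    also have "\<dots> \<le> B * 1"
      using that B[of 0] by (intro mult_mono B power_le_one) (auto simp: inverse_le_1_iff)
    finally show ?thesis by simp
  qed
  then show ?thesis by blast
qed

lemma Wf_lipschitz:
  assumes "\<And>z. 1 \<le> z \<Longrightarrow> deriv (Wf V) z \<le> K" and "1 \<le> a" and "a \<le> b"
  shows "Wf V b - Wf V a \<le> K * (b - a)"
proof (rule diff_le_of_deriv_le[OF \<open>a \<le> b\<close>])
  fix x assume "x \<in> {a..b}"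
  then have "1 \<le> x" using assms(2) by auto
  then have "(Wf V has_real_derivative V' (inverse x) * - (inverse x ^ 2)) (at x)"
    by (intro Wf_has_real_derivative) simp
  then show "(Wf V has_real_derivative deriv (Wf V) x) (at x)"
    by (simp add: DERIV_imp_deriv)
  show "deriv (Wf V) x \<le> K"
    using \<open>1 \<le> x\<close> assms(1) by blast
qed

lemma deriv_Wf_le_Sup:
  assumes "1 \<le> z"
  shows "deriv (Wf V) z \<le> Sup ((\<lambda>w. deriv (Wf V) w) ` {1..})"
    and "\<bar>deriv (Wf V) z\<bar> \<le> Sup ((\<lambda>w. \<bar>deriv (Wf V) w\<bar>) ` {1..})"
proof -
  obtain B where B: "\<forall>w\<ge>1. \<bar>deriv (Wf V) w\<bar> \<le> B"
    using abs_deriv_Wf_bounded by blast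
  show "deriv (Wf V) z \<le> Sup ((\<lambda>w. deriv (Wf V) w) ` {1..})"
    using assms B by (intro cSup_upper bdd_aboveI2[of _ _ B]) (auto simp: abs_le_iff)
  show "\<bar>deriv (Wf V) z\<bar> \<le> Sup ((\<lambda>w. \<bar>deriv (Wf V) w\<bar>) ` {1..})"
    using assms B by (intro cSup_upper bdd_aboveI2[of _ _ B]) auto
qed

lemma Wf_lipschitz_Sup_abs:
  shows "0 \<le> Sup ((\<lambda>w. \<bar>deriv (Wf V) w\<bar>) ` {1..})"
    and "1 \<le> a \<Longrightarrow> a \<le> b \<Longrightarrow> Wf V b - Wf V a \<le> Sup ((\<lambda>w. \<bar>deriv (Wf V) w\<bar>) ` {1..}) * (b - a)"
proof -
  show "0 \<le> Sup ((\<lambda>w. \<bar>deriv (Wf V) w\<bar>) ` {1..})"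
    using deriv_Wf_le_Sup(2)[of 1] by linarith
  show "Wf V b - Wf V a \<le> Sup ((\<lambda>w. \<bar>deriv (Wf V) w\<bar>) ` {1..}) * (b - a)" if "1 \<le> a" "a \<le> b"
    using that deriv_Wf_le_Sup(2) by (intro Wf_lipschitz) (auto intro: abs_le_D1)
qed

end

theorem corollary2p3:
  fixes Phi V V' :: "real \<Rightarrow> real" and \<alpha> dz dt :: real and y0 :: "int \<Rightarrow> real"
  assumes Phi_nonneg: "\<forall>z\<ge>0. Phi z \<ge> 0"
    and Phi_noninc: "\<forall>x y. 0 \<le> x \<longrightarrow> x \<le> y \<longrightarrow> Phi y \<le> Phi x"
    and Phi_int: "(Phi has_integral 1) {0..}"
    and Phi_moment: "(\<lambda>z. z * Phi z) integrable_on {0..}"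
    and alpha_pos: "\<alpha> > 0"
    and V_deriv: "\<forall>x\<ge>0. (V has_real_derivative V' x) (at x within {0..})"
    and V'_cont: "continuous_on {0..} V'"
    and V_noninc: "\<forall>x y. 0 \<le> x \<longrightarrow> x \<le> y \<longrightarrow> V y \<le> V x"
    and dz_pos: "dz > 0" and dt_pos: "dt > 0"
    and CFL: "0 \<le> (dt / dz) * Sup ((\<lambda>w. deriv (Wf V) w) ` {1..})"
             "(dt / dz) * Sup ((\<lambda>w. deriv (Wf V) w) ` {1..}) \<le> 1"
    and y0_bdd: "bdd_above (range y0)"
    and y0_ge1: "\<forall>i. y0 i \<ge> 1"
    and y0_BV: "(\<lambda>i. \<bar>y0 (i + 1) - y0 i\<bar>) summable_on UNIV"
  shows "\<forall>n i.
     1 \<le> Inf (range y0)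
     \<and> Inf (range y0) \<le> scheme Phi \<alpha> dz dt V y0 n i
     \<and> scheme Phi \<alpha> dz dt V y0 n i \<le> Sup (range y0)
     \<and> (\<lambda>k. \<bar>scheme Phi \<alpha> dz dt V y0 n (k + 1) - scheme Phi \<alpha> dz dt V y0 n k\<bar>) summable_on UNIV
     \<and> (\<Sum>\<^sub>\<infinity> k. \<bar>scheme Phi \<alpha> dz dt V y0 n (k + 1) - scheme Phi \<alpha> dz dt V y0 n k\<bar>)
         \<le> (\<Sum>\<^sub>\<infinity> k. \<bar>y0 (k + 1) - y0 k\<bar>)
     \<and> (\<lambda>k. \<bar>scheme Phi \<alpha> dz dt V y0 (Suc n) k - scheme Phi \<alpha> dz dt V y0 n k\<bar>) summable_on UNIV
     \<and> dz * (\<Sum>\<^sub>\<infinity> k. \<bar>scheme Phi \<alpha> dz dt V y0 (Suc n) k - scheme Phi \<alpha> dz dt V y0 n k\<bar>)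
         \<le> dt * Sup ((\<lambda>w. \<bar>deriv (Wf V) w\<bar>) ` {1..}) * (\<Sum>\<^sub>\<infinity> k. \<bar>y0 (k + 1) - y0 k\<bar>)"
proof -
  interpret kernel Phi \<alpha> dz
    using assms by unfold_locales auto
  interpret flux V V'
    using assms by unfold_locales auto
  let ?L = "Sup ((\<lambda>w. deriv (Wf V) w) ` {1..})" and ?L' = "Sup ((\<lambda>w. \<bar>deriv (Wf V) w\<bar>) ` {1..})"
  have "0 \<le> ?L"
    using CFL(1) divide_pos_pos[OF dt_pos dz_pos] by (meson mult_pos_neg not_le)
  then interpret nonlocal_scheme c "Wf V" "dt / dz" ?L
    using kernel_weight_nonneg kernel_weight_Suc_le kernel_weight_has_sum Wf_mono
      Wf_lipschitz[OF deriv_Wf_le_Sup(1)] CFL(2) dt_pos dz_pos by unfold_locales auto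
  have scheme_eq: "scheme Phi \<alpha> dz dt V y0 n = (step ^^ n) (avg y0)" for n
    by (induction n) (auto simp: infsum_Phi_coef avg_def step_def Wbar_def forward_diff_def)
  have "bdd_below (range y0)"
    using y0_ge1 by (intro bdd_belowI2[of _ 1]) auto
  then have y0_bounds: "Inf (range y0) \<le> y0 j" "y0 j \<le> Sup (range y0)" "1 \<le> Inf (range y0)" for j
    using y0_ge1 y0_bdd by (auto intro: cInf_lower cSup_upper cInf_greatest)
  have bv0: "bounded_variation y0"
    using y0_BV by (simp add: bounded_variation_def forward_diff_def)
  note bounds = iterate_bounds_variation[OF y0_bounds(1,2,3) bv0]
  note increment = iterate_increment[OF y0_bounds(1,2,3) bv0 Wf_lipschitz_Sup_abs]
  have "dz * (\<Sum>\<^sub>\<infinity>k. \<bar>step ((step ^^ n) (avg y0)) k - (step ^^ n) (avg y0) k\<bar>)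
      \<le> dt * ?L' * total_variation y0" for n
    using mult_left_mono[OF increment(2)[of n] less_imp_le[OF dz_pos]] dz_pos by simp
  with bounds increment(1) y0_bounds(3) show ?thesis
    by (simp add: scheme_eq bounded_variation_def total_variation_def forward_diff_def)
qed

end
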